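(* Let $H$ be a Hilbert space and $U_{ik}\in B(H)$, $i,k=1,\dots,n$, operators satisfying relations (R1)–(R5). Then for all $i,j,k,l$ with $i\neq j$ and $k\neq l$, $$U_{ik}U_{jl}=\omega_{ji}\omega_{kl}U_{jl}U_{ik}.$$
   Context: $n\ge2$, $\theta\in M_n(\mathbb R)$ skew-symmetric, $\omega_{ij}=e^{2\pi i\theta_{ij}}$. Relations, for all $i,j,k,l\in\{1,\dots,n\}$: (R1) $U_{ik}U_{jl}+\omega_{ji}U_{jk}U_{il}=\omega_{kl}U_{il}U_{jk}+\omega_{ji}\omega_{kl}U_{jl}U_{ik}$; (R2) $\sum_iU_{ik}U_{il}^*=\delta_{kl}1$; (R3) $\sum_iU_{il}^*U_{ik}=\delta_{kl}1$; (R4) $U_{jk}U_{ik}^*=0$ for $i\neq j$; (R5) $U_{ik}^*U_{jk}=0$ for $i\neq j$. *)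

theory Defs
  imports Complex_Main
begin

text \<open>The inner product is linear in the second and conjugate-linear in the first argument.\<close>

class complex_vector = ab_group_add +
  fixes scaleC :: "complex \<Rightarrow> 'a \<Rightarrow> 'a" (infixr \<open>*\<^sub>C\<close> 75)
  assumes scaleC_add_right: "a *\<^sub>C (x + y) = a *\<^sub>C x + a *\<^sub>C y"
    and scaleC_add_left: "(a + b) *\<^sub>C x = a *\<^sub>C x + b *\<^sub>C x"
    and scaleC_scaleC: "a *\<^sub>C (b *\<^sub>C x) = (a * b) *\<^sub>C x"
    and scaleC_one: "1 *\<^sub>C x = x"

class complex_inner = complex_vector +
  fixes cinner :: "'a \<Rightarrow> 'a \<Rightarrow> complex"
  assumes cinner_conj: "cinner x y = cnj (cinner y x)"
    and cinner_add_right: "cinner x (y + z) = cinner x y + cinner x z"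
    and cinner_scaleC_right: "cinner x (a *\<^sub>C y) = a * cinner x y"
    and cinner_nonneg: "0 \<le> Re (cinner x x)"
    and cinner_zero_iff: "cinner x x = 0 \<longleftrightarrow> x = 0"

definition cnorm :: "'a::complex_inner \<Rightarrow> real" where
  "cnorm x = sqrt (Re (cinner x x))"

class chilbert_space = complex_inner +
  assumes chilbert_complete:
    "\<forall>X::nat \<Rightarrow> 'a.
       (\<forall>e>0. \<exists>N. \<forall>m\<ge>N. \<forall>n\<ge>N. sqrt (Re (cinner (X m - X n) (X m - X n))) < e)
       \<longrightarrow> (\<exists>L. \<forall>e>0. \<exists>N. \<forall>n\<ge>N. sqrt (Re (cinner (X n - L) (X n - L))) < e)"

definition bounded_op :: "('a::complex_inner \<Rightarrow> 'a) \<Rightarrow> bool" where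
  "bounded_op T \<longleftrightarrow> (\<forall>x y. T (x + y) = T x + T y) \<and> (\<forall>c x. T (c *\<^sub>C x) = c *\<^sub>C T x)
                     \<and> (\<exists>K. \<forall>x. cnorm (T x) \<le> K * cnorm x)"

definition is_adjoint :: "('a::complex_inner \<Rightarrow> 'a) \<Rightarrow> ('a \<Rightarrow> 'a) \<Rightarrow> bool" where
  "is_adjoint T S \<longleftrightarrow> (\<forall>x y. cinner (T x) y = cinner x (S y))"

definition omega :: "(nat \<Rightarrow> nat \<Rightarrow> real) \<Rightarrow> nat \<Rightarrow> nat \<Rightarrow> complex" where
  "omega \<theta> i j = exp (2 * of_real pi * \<i> * of_real (\<theta> i j))"

end

theory Submission
  imports Defs
begin

text \<open>Relations (R3) and (R4) make each \<open>U\<^sub>a\<^sub>k\<close> a partial isometry, and together with (R3) for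
\<open>k \<noteq> l\<close> they give \<open>U\<^sub>a\<^sub>l\<^sup>* U\<^sub>a\<^sub>k = 0\<close>. Applying \<open>U\<^sub>i\<^sub>k\<^sup>*\<close> to (R1) kills the second term on
the left by (R5) and the first term on the right by this orthogonality, so
\<open>E = U\<^sub>i\<^sub>k U\<^sub>j\<^sub>l x - \<omega>\<^sub>j\<^sub>i \<omega>\<^sub>k\<^sub>l U\<^sub>j\<^sub>l U\<^sub>i\<^sub>k x\<close> lies in the kernel of \<open>U\<^sub>i\<^sub>k\<^sup>*\<close>; symmetrically it lies in the
kernel of \<open>U\<^sub>j\<^sub>l\<^sup>*\<close>. Hence \<open>E\<close> is orthogonal to the ranges of \<open>U\<^sub>i\<^sub>k\<close> and \<open>U\<^sub>j\<^sub>l\<close>, which contain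
both terms of \<open>E\<close>, so \<open>\<langle>E, E\<rangle> = 0\<close>.\<close>

lemma additive_scaleC_right: "additive (\<lambda>x::'a::complex_vector. c *\<^sub>C x)"
  by (rule additive.intro) (rule scaleC_add_right)

lemma additive_cinner_right: "additive (cinner (x::'a::complex_inner))"
  by (rule additive.intro) (rule cinner_add_right)

lemma cinner_zero_left: "cinner 0 (x::'a::complex_inner) = 0"
  by (subst cinner_conj) (simp add: additive.zero[OF additive_cinner_right])

lemma cinner_adjoint_left:
  assumes "is_adjoint T S"
  shows "cinner z (T w) = cinner (S z) w"
  using assms unfolding is_adjoint_def by (metis cinner_conj)

lemma cinner_eqI:
  assumes "\<And>y. cinner y u = cinner y (v::'a::complex_inner)"
  shows "u = v"
proof -
  have "cinner (u - v) (u - v) = 0"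
    using assms[of "u - v"] by (simp add: additive.diff[OF additive_cinner_right])
  then have "u - v = 0" using cinner_zero_iff by blast
  then show ?thesis by simp
qed

lemma additive_adjoint:
  assumes "is_adjoint T S"
  shows "additive S"
proof
  fix a b
  have adjoint: "cinner (T x) y = cinner x (S y)" for x y
    using assms unfolding is_adjoint_def by blast
  then show "S (a + b) = S a + S b"
    by (intro cinner_eqI) (simp add: cinner_add_right flip: adjoint)
qed

lemma adjoint_scaleC:
  assumes "is_adjoint T S"
  shows "S (c *\<^sub>C a) = c *\<^sub>C S a"
proof -
  have adjoint: "cinner (T x) y = cinner x (S y)" for x y
    using assms unfolding is_adjoint_def by blast
  then show ?thesis
    by (intro cinner_eqI) (simp add: cinner_scaleC_right flip: adjoint)
qed

lemma eq_if_adjoints_annihilate_difference: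
  assumes T: "is_adjoint T S" and T': "is_adjoint T' S'"
    and "S (T a - c *\<^sub>C T' b) = 0" and "S' (T a - c *\<^sub>C T' b) = 0"
  shows "T a = c *\<^sub>C T' b"
proof -
  define E where "E = T a - c *\<^sub>C T' b"
  have "cinner E E = cinner E (T a - c *\<^sub>C T' b)" by (simp only: E_def)
  also have "\<dots> = cinner E (T a) - c * cinner E (T' b)"
    by (simp only: additive.diff[OF additive_cinner_right] cinner_scaleC_right)
  also have "\<dots> = 0"
    using assms unfolding E_def[symmetric] cinner_adjoint_left[OF T] cinner_adjoint_left[OF T']
    by (simp add: cinner_zero_left)
  finally have "E = 0" using cinner_zero_iff by blast
  then show ?thesis unfolding E_def by simp
qed

text \<open>In the next two lemmas \<open>V i\<close>, \<open>W i\<close> and \<open>W' i\<close> stand for \<open>U\<^sub>i\<^sub>k\<close>, \<open>U\<^sub>i\<^sub>k\<^sup>*\<close> and \<open>U\<^sub>i\<^sub>l\<^sup>*\<close>: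
the resolutions are instances of (R3) and the orthogonality hypothesis is (R4).\<close>

lemma partial_isometry_of_resolution:
  fixes V W :: "'i \<Rightarrow> 'a::ab_group_add \<Rightarrow> 'a"
  assumes "finite I" "a \<in> I" "additive (V a)"
    and resolution: "\<And>x. (\<Sum>i\<in>I. W i (V i x)) = x"
    and orth: "\<And>i y. i \<in> I \<Longrightarrow> i \<noteq> a \<Longrightarrow> V a (W i y) = 0"
  shows "V a (W a (V a z)) = V a z"
proof -
  have "V a z = (\<Sum>i\<in>I. V a (W i (V i z)))"
    using additive.sum[OF assms(3)] by (metis resolution)
  also have "\<dots> = V a (W a (V a z))"
    using assms(1,2) orth by (subst sum.mono_neutral_right[of I "{a}"]) auto
  finally show ?thesis by simp
qed

lemma adjoint_comp_eq_zero_of_resolutions: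
  fixes V W W' :: "'i \<Rightarrow> 'a::ab_group_add \<Rightarrow> 'a"
  assumes "finite I" "a \<in> I" "additive (V a)"
    and resolution: "\<And>x. (\<Sum>i\<in>I. W i (V i x)) = x"
    and cross_resolution: "\<And>x. (\<Sum>i\<in>I. W' i (V i x)) = 0"
    and orth: "\<And>i j y. i \<in> I \<Longrightarrow> j \<in> I \<Longrightarrow> i \<noteq> j \<Longrightarrow> V j (W i y) = 0"
    and zero: "\<And>i. i \<in> I \<Longrightarrow> W' i 0 = 0"
  shows "W' a (V a z) = 0"
proof -
  let ?y = "W a (V a z)"
  have "W' a (V a z) = W' a (V a ?y)"
    using partial_isometry_of_resolution[of I a V W] assms orth by simp
  also have "\<dots> = (\<Sum>i\<in>I. W' i (V i ?y))"
  proof (rule sum.mono_neutral_right[of I "{a}", symmetric, simplified])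
    show "\<forall>i\<in>I - {a}. W' i (V i ?y) = 0"
    proof
      fix i
      assume "i \<in> I - {a}"
      then show "W' i (V i ?y) = 0"
        using orth[of a i] zero[of i] \<open>a \<in> I\<close> by auto
    qed
  qed (use assms(1,2) in simp_all)
  also have "\<dots> = 0" by (rule cross_resolution)
  finally show ?thesis .
qed

lemma eq_of_balanced_in_adjoint_kernels:
  assumes T: "is_adjoint T S" and T': "is_adjoint T' S'"
    and balanced: "T a + p = q + c *\<^sub>C T' b"
    and "S p = 0" "S q = 0" "S' p = 0" "S' q = 0"
  shows "T a = c *\<^sub>C T' b"
proof -
  have difference: "T a - c *\<^sub>C T' b = q - p"
    using balanced by (simp add: algebra_simps)
  show ?thesis
    using assms additive.diff[OF additive_adjoint[OF T]] additive.diff[OF additive_adjoint[OF T']]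
    by (intro eq_if_adjoints_annihilate_difference[OF T T']) (simp_all add: difference)
qed

locale column_relations =
  fixes n :: nat and U Us :: "nat \<Rightarrow> nat \<Rightarrow> 'h::complex_inner \<Rightarrow> 'h"
  assumes bnd: "\<forall>i\<in>{1..n}. \<forall>k\<in>{1..n}. bounded_op (U i k)"
    and adj: "\<forall>i\<in>{1..n}. \<forall>k\<in>{1..n}. is_adjoint (U i k) (Us i k)"
    and R3: "\<forall>k\<in>{1..n}. \<forall>l\<in>{1..n}. \<forall>x.
              (\<Sum>i\<in>{1..n}. Us i l (U i k x)) = (if k = l then x else 0)"
    and R4: "\<forall>i\<in>{1..n}. \<forall>j\<in>{1..n}. \<forall>k\<in>{1..n}. i \<noteq> j \<longrightarrow> (\<forall>x. U j k (Us i k x) = 0)"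
    and R5: "\<forall>i\<in>{1..n}. \<forall>j\<in>{1..n}. \<forall>k\<in>{1..n}. i \<noteq> j \<longrightarrow> (\<forall>x. Us i k (U j k x) = 0)"
begin

lemma additive_Us:
  assumes "a \<in> {1..n}" "k \<in> {1..n}"
  shows "additive (Us a k)"
  using adj assms additive_adjoint by blast

lemma orthogonal_columns:
  assumes a: "a \<in> {1..n}" and k: "k \<in> {1..n}" and l: "l \<in> {1..n}" and "k \<noteq> l"
  shows "Us a l (U a k z) = 0"
proof (rule adjoint_comp_eq_zero_of_resolutions[where I = "{1..n}" and V = "\<lambda>i. U i k"
      and W = "\<lambda>i. Us i k" and W' = "\<lambda>i. Us i l"])
  show "additive (U a k)"
    using bnd a k unfolding bounded_op_def by (simp add: additive.intro)
  show "(\<Sum>i\<in>{1..n}. Us i k (U i k x)) = x" "(\<Sum>i\<in>{1..n}. Us i l (U i k x)) = 0" for x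
    using R3[rule_format, of k k x] R3[rule_format, of k l x] assms by simp_all
  show "U j k (Us i k y) = 0" if "i \<in> {1..n}" "j \<in> {1..n}" "i \<noteq> j" for i j y
    using R4[rule_format, of i j k y] that k by blast
  show "Us i l 0 = 0" if "i \<in> {1..n}" for i
    using additive.zero[OF additive_Us] that l by blast
qed (use a in simp_all)

lemma adjoint_product_vanishes:
  assumes "a \<in> {1..n}" "b \<in> {1..n}" "k \<in> {1..n}" "l \<in> {1..n}" "(a = b) \<noteq> (k = l)"
  shows "Us a k (c *\<^sub>C U b l y) = 0"
proof -
  have "Us a k (U b l y) = 0"
    using assms R5[rule_format, of a b k y] orthogonal_columns[of a l k y] by (cases "a = b") auto
  moreover have "is_adjoint (U a k) (Us a k)"
    using adj assms by simp
  ultimately show ?thesis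
    by (simp add: adjoint_scaleC additive.zero[OF additive_scaleC_right])
qed

end

theorem proposition3p16:
  fixes n :: nat and \<theta> :: "nat \<Rightarrow> nat \<Rightarrow> real"
    and U Us :: "nat \<Rightarrow> nat \<Rightarrow> 'h::chilbert_space \<Rightarrow> 'h"
  assumes n2: "n \<ge> 2"
    and skew: "\<forall>i\<in>{1..n}. \<forall>j\<in>{1..n}. \<theta> i j = - \<theta> j i"
    and bnd: "\<forall>i\<in>{1..n}. \<forall>k\<in>{1..n}. bounded_op (U i k)"
    and adj: "\<forall>i\<in>{1..n}. \<forall>k\<in>{1..n}. is_adjoint (U i k) (Us i k)"
    and R1: "\<forall>i\<in>{1..n}. \<forall>j\<in>{1..n}. \<forall>k\<in>{1..n}. \<forall>l\<in>{1..n}. \<forall>x.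
              U i k (U j l x) + omega \<theta> j i *\<^sub>C U j k (U i l x)
              = omega \<theta> k l *\<^sub>C U i l (U j k x)
                + (omega \<theta> j i * omega \<theta> k l) *\<^sub>C U j l (U i k x)"
    and R2: "\<forall>k\<in>{1..n}. \<forall>l\<in>{1..n}. \<forall>x.
              (\<Sum>i\<in>{1..n}. U i k (Us i l x)) = (if k = l then x else 0)"
    and R3: "\<forall>k\<in>{1..n}. \<forall>l\<in>{1..n}. \<forall>x.
              (\<Sum>i\<in>{1..n}. Us i l (U i k x)) = (if k = l then x else 0)"
    and R4: "\<forall>i\<in>{1..n}. \<forall>j\<in>{1..n}. \<forall>k\<in>{1..n}. i \<noteq> j \<longrightarrow> (\<forall>x. U j k (Us i k x) = 0)"
    and R5: "\<forall>i\<in>{1..n}. \<forall>j\<in>{1..n}. \<forall>k\<in>{1..n}. i \<noteq> j \<longrightarrow> (\<forall>x. Us i k (U j k x) = 0)"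
  shows "\<forall>i\<in>{1..n}. \<forall>j\<in>{1..n}. \<forall>k\<in>{1..n}. \<forall>l\<in>{1..n}. i \<noteq> j \<longrightarrow> k \<noteq> l \<longrightarrow>
           (\<forall>x. U i k (U j l x) = (omega \<theta> j i * omega \<theta> k l) *\<^sub>C U j l (U i k x))"
proof -
  interpret column_relations n U Us
    by (rule column_relations.intro) (fact bnd adj R3 R4 R5)+
  show ?thesis
  proof (intro ballI impI allI)
    fix i j k l x
    assume ijkl: "i \<in> {1..n}" "j \<in> {1..n}" "k \<in> {1..n}" "l \<in> {1..n}" and "i \<noteq> j" "k \<noteq> l"
    show "U i k (U j l x) = (omega \<theta> j i * omega \<theta> k l) *\<^sub>C U j l (U i k x)"
      using adj ijkl \<open>i \<noteq> j\<close> \<open>k \<noteq> l\<close>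
      by (intro eq_of_balanced_in_adjoint_kernels[where T = "U i k" and S = "Us i k"
            and T' = "U j l" and S' = "Us j l", OF _ _ R1[rule_format, OF ijkl, of x]]
          adjoint_product_vanishes) auto
  qed
qed

end
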